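(* Let $\mathcal{C} \subseteq \mathbb{R}^n$ be a polyhedron with nonempty interior, and let $Z$ be a random vector in $\mathbb{R}^n$ with $\mathbb{E}Z = 0$ and $\mathbb{E}\|Z\|^2 < \infty$. Let $\theta_0 \in \mathcal{C}$ and suppose $\mathbb{P}(Z \in \mathrm{int}\, T_{\mathcal{C}}(\theta_0)) > 0$. Then $$\sup_{\theta^* \notin \mathcal{C} :\ \Pi_{\mathcal{C}}(\theta^* ) = \theta_0} \delta\big(T_{\mathcal{C}}(\Pi_{\mathcal{C}}(\theta^* )) \cap (\theta^* - \Pi_{\mathcal{C}}(\theta^* ))^\perp\big) < \delta(T_{\mathcal{C}}(\theta_0)).$$
   Context: A polyhedron is a set $\{x : Ax \le b\}$. $\Pi_{\mathcal{C}}$ is Euclidean projection onto $\mathcal{C}$; $v^\perp = \{u:\langle u,v\rangle=0\}$; $T_{\mathcal{C}}(\theta_0) = \mathrm{cl}\{\alpha(\theta-\theta_0): \alpha\ge0, \theta\in\mathcal{C}\}$ is the tangent cone. For a closed convex cone $T$, $\delta(T) = \mathbb{E}\|\Pi_T(Z)\|^2$ (generalized statistical dimension with respect to the distribution of $Z$). *)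

theory Defs
  imports "HOL-Analysis.Analysis" "HOL-Probability.Probability"
begin

text \<open>Euclidean projection onto C is the library's closest_point C.
  Tangent cone of C at theta0: closure of the cone generated by C - theta0.\<close>
definition tangent_cone :: "'a::euclidean_space set \<Rightarrow> 'a \<Rightarrow> 'a set" where
  "tangent_cone C x0 = closure {\<alpha> *\<^sub>R (x - x0) | \<alpha> x. \<alpha> \<ge> 0 \<and> x \<in> C}"

definition perp :: "'a::real_inner \<Rightarrow> 'a set" where
  "perp v = {u. inner u v = 0}"

definition stat_dim :: "'w measure \<Rightarrow> ('w \<Rightarrow> 'a::euclidean_space) \<Rightarrow> 'a set \<Rightarrow> real" where
  "stat_dim M Z T = (\<integral>\<omega>. (norm (closest_point T (Z \<omega>)))\<^sup>2 \<partial>M)"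

end

theory Submission
  imports Defs
begin

text \<open>The tangent cone \<open>T\<close> of a polyhedron at \<open>\<theta>0\<close> is again a polyhedron. If \<open>\<theta>0\<close> is the
  projection of \<open>\<theta>s \<notin> C\<close>, then \<open>v = \<theta>s - \<theta>0 \<noteq> 0\<close> is a normal vector, so \<open>T \<inter> v\<^sup>\<perp>\<close> is a face
  of \<open>T\<close>; hence only finitely many cones occur on the left-hand side. Each of them misses
  \<open>int T\<close>, and for a closed convex cone \<open>K\<close> one has \<open>\<parallel>z\<parallel>\<^sup>2 = \<parallel>\<Pi>\<^sub>K z\<parallel>\<^sup>2 + \<parallel>z - \<Pi>\<^sub>K z\<parallel>\<^sup>2\<close>, so
  \<open>\<parallel>\<Pi>\<^sub>K Z\<parallel>\<^sup>2 < \<parallel>Z\<parallel>\<^sup>2 = \<parallel>\<Pi>\<^sub>T Z\<parallel>\<^sup>2\<close> on the event \<open>Z \<in> int T\<close> of positive probability. Thus each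
  of the finitely many values lies strictly below \<open>\<delta>(T)\<close>.\<close>

lemma closest_point_cone_orthogonal:
  fixes K :: "'a::euclidean_space set"
  assumes "convex K" "closed K" "cone K" "K \<noteq> {}"
  shows "(z - closest_point K z) \<bullet> closest_point K z = 0"
proof -
  let ?p = "closest_point K z"
  have "?p \<in> K" using assms closest_point_in_set by blast
  then have "0 \<in> K" "2 *\<^sub>R ?p \<in> K"
    using assms(3,4) cone_contains_0 mem_cone[OF assms(3), of ?p 2] by auto
  then have "(z - ?p) \<bullet> (0 - ?p) \<le> 0" "(z - ?p) \<bullet> (2 *\<^sub>R ?p - ?p) \<le> 0"
    using closest_point_dot[OF assms(1,2)] by blast+
  then show ?thesis by (simp add: algebra_simps)
qed

lemma closest_point_cone_polar:
  fixes K :: "'a::euclidean_space set"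
  assumes "convex K" "closed K" "cone K" "K \<noteq> {}" "y \<in> K"
  shows "(z - closest_point K z) \<bullet> y \<le> 0"
  using closest_point_dot[OF assms(1,2,5), of z] closest_point_cone_orthogonal[OF assms(1-4)]
  by (simp add: inner_diff_right)

lemma norm_closest_point_cone_Pythagorean:
  fixes K :: "'a::euclidean_space set"
  assumes "convex K" "closed K" "cone K" "K \<noteq> {}"
  shows "(norm z)\<^sup>2 = (norm (closest_point K z))\<^sup>2 + (norm (z - closest_point K z))\<^sup>2"
  using norm_add_Pythagorean[of "closest_point K z" "z - closest_point K z"]
    closest_point_cone_orthogonal[OF assms]
  by (simp add: orthogonal_def inner_commute)

lemma norm_closest_point_cone_le:
  fixes K :: "'a::euclidean_space set"
  assumes "convex K" "closed K" "cone K" "K \<noteq> {}"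
  shows "norm (closest_point K z) \<le> norm z"
proof (rule power2_le_imp_le)
  show "(norm (closest_point K z))\<^sup>2 \<le> (norm z)\<^sup>2"
    using norm_closest_point_cone_Pythagorean[OF assms, of z]
      zero_le_power2[of "norm (z - closest_point K z)"]
    by linarith
qed simp

lemma norm_closest_point_cone_less:
  fixes K :: "'a::euclidean_space set"
  assumes "convex K" "closed K" "cone K" "K \<noteq> {}" "z \<notin> K"
  shows "norm (closest_point K z) < norm z"
proof -
  have "z \<noteq> closest_point K z"
    using assms closest_point_in_set by metis
  then have "(norm (z - closest_point K z))\<^sup>2 > 0" by simp
  then have "(norm (closest_point K z))\<^sup>2 < (norm z)\<^sup>2"
    using norm_closest_point_cone_Pythagorean[OF assms(1-4), of z] by linarith
  then show ?thesis by (rule power2_less_imp_less) simp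
qed

lemma norm_closest_point_cone_mono:
  fixes K T :: "'a::euclidean_space set"
  assumes K: "convex K" "closed K" "cone K" "K \<noteq> {}"
    and T: "convex T" "closed T" "cone T" "T \<noteq> {}"
    and "K \<subseteq> T"
  shows "norm (closest_point K z) \<le> norm (closest_point T z)"
proof -
  let ?p = "closest_point K z" and ?q = "closest_point T z"
  have "?p \<in> T" using K assms(9) closest_point_in_set by blast
  then have "(z - ?q) \<bullet> ?p \<le> 0" using closest_point_cone_polar[OF T] by blast
  have "(norm ?p)\<^sup>2 = z \<bullet> ?p"
    using closest_point_cone_orthogonal[OF K, of z] by (simp add: power2_norm_eq_inner inner_diff_left)
  also have "\<dots> = ?q \<bullet> ?p + (z - ?q) \<bullet> ?p" by (simp add: inner_diff_left)
  also have "\<dots> \<le> norm ?q * norm ?p"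
    using \<open>(z - ?q) \<bullet> ?p \<le> 0\<close> Cauchy_Schwarz_ineq2[of ?q ?p] by linarith
  finally show ?thesis
    by (metis mult_right_le_imp_le norm_ge_zero order_le_less power2_eq_square)
qed

lemma integrable_norm_closest_point_cone_sq:
  fixes K :: "'a::euclidean_space set" and Z :: "'w \<Rightarrow> 'a"
  assumes "convex K" "closed K" "cone K" "K \<noteq> {}"
    and "Z \<in> borel_measurable M" "integrable M (\<lambda>\<omega>. (norm (Z \<omega>))\<^sup>2)"
  shows "integrable M (\<lambda>\<omega>. (norm (closest_point K (Z \<omega>)))\<^sup>2)"
proof (rule Bochner_Integration.integrable_bound[OF assms(6)])
  have "(\<lambda>\<omega>. closest_point K (Z \<omega>)) \<in> borel_measurable M"
    using continuous_on_closest_point[OF assms(1,2,4)]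
    by (intro measurable_compose[OF assms(5) borel_measurable_continuous_onI])
  then show "(\<lambda>\<omega>. (norm (closest_point K (Z \<omega>)))\<^sup>2) \<in> borel_measurable M"
    by measurable
  show "AE \<omega> in M. norm ((norm (closest_point K (Z \<omega>)))\<^sup>2) \<le> norm ((norm (Z \<omega>))\<^sup>2)"
    using norm_closest_point_cone_le[OF assms(1-4)] by (simp add: power_mono)
qed

lemma stat_dim_strict_mono:
  fixes K T :: "'a::euclidean_space set" and Z :: "'w \<Rightarrow> 'a"
  assumes "finite_measure M"
    and K: "convex K" "closed K" "cone K" "K \<noteq> {}"
    and T: "convex T" "closed T" "cone T" "T \<noteq> {}"
    and "K \<subseteq> T"
    and "Z \<in> borel_measurable M" "integrable M (\<lambda>\<omega>. (norm (Z \<omega>))\<^sup>2)"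
    and pos: "measure M {\<omega> \<in> space M. Z \<omega> \<in> T - K} > 0"
  shows "stat_dim M Z K < stat_dim M Z T"
  unfolding stat_dim_def
proof (rule finite_measure.integral_less_AE[OF assms(1)])
  let ?E = "{\<omega> \<in> space M. Z \<omega> \<in> T - K}"
  show "?E \<in> sets M" using pos measure_notin_sets by fastforce
  show "emeasure M ?E \<noteq> 0" using pos by (auto simp: measure_def)
  show "AE \<omega> in M. \<omega> \<in> ?E \<longrightarrow>
      (norm (closest_point K (Z \<omega>)))\<^sup>2 \<noteq> (norm (closest_point T (Z \<omega>)))\<^sup>2"
    by (intro AE_I2 impI) (auto simp: closest_point_self dest!: norm_closest_point_cone_less[OF K])
  show "AE \<omega> in M. (norm (closest_point K (Z \<omega>)))\<^sup>2 \<le> (norm (closest_point T (Z \<omega>)))\<^sup>2"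
    using norm_closest_point_cone_mono[OF K T \<open>K \<subseteq> T\<close>] by (simp add: power_mono)
  show "integrable M (\<lambda>\<omega>. (norm (closest_point K (Z \<omega>)))\<^sup>2)"
    by (rule integrable_norm_closest_point_cone_sq[OF K assms(11,12)])
  show "integrable M (\<lambda>\<omega>. (norm (closest_point T (Z \<omega>)))\<^sup>2)"
    by (rule integrable_norm_closest_point_cone_sq[OF T assms(11,12)])
qed

lemma interior_Int_supporting_hyperplane:
  fixes T :: "'a::euclidean_space set"
  assumes "v \<noteq> 0" "\<And>d. d \<in> T \<Longrightarrow> v \<bullet> d \<le> 0"
  shows "interior T \<inter> {x. v \<bullet> x = 0} = {}"
proof -
  have "interior T \<subseteq> interior {x. v \<bullet> x \<le> 0}"
    using assms(2) by (intro interior_mono) blast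
  then show ?thesis using assms(1) by auto
qed

lemma stat_dim_supporting_hyperplane_less:
  fixes T :: "'a::euclidean_space set" and Z :: "'w \<Rightarrow> 'a"
  assumes M: "finite_measure M"
    and T: "convex T" "closed T" "cone T" "T \<noteq> {}"
    and v: "v \<noteq> 0" "\<forall>d\<in>T. v \<bullet> d \<le> 0"
    and Z: "Z \<in> borel_measurable M" "integrable M (\<lambda>\<omega>. (norm (Z \<omega>))\<^sup>2)"
    and pos: "measure M {\<omega> \<in> space M. Z \<omega> \<in> interior T} > 0"
  shows "stat_dim M Z (T \<inter> {x. v \<bullet> x = 0}) < stat_dim M Z T"
proof -
  let ?K = "T \<inter> {x. v \<bullet> x = 0}"
  have "cone ?K"
    unfolding cone_def by (auto intro: mem_cone[OF T(3)])
  moreover have "0 \<in> ?K"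
    using cone_contains_0[OF T(3)] T(4) by simp
  ultimately have K: "convex ?K" "closed ?K" "cone ?K" "?K \<noteq> {}"
    using convex_Int[OF T(1) convex_hyperplane] closed_Int[OF T(2) closed_hyperplane] by auto
  have "interior T \<subseteq> T - ?K"
    using interior_Int_supporting_hyperplane[of v T] v interior_subset by blast
  moreover have "Z -` (T - ?K) \<inter> space M \<in> sets M"
    using T(2) K(2) by (intro measurable_sets[OF Z(1)]) auto
  ultimately have "measure M {\<omega> \<in> space M. Z \<omega> \<in> interior T}
      \<le> measure M {\<omega> \<in> space M. Z \<omega> \<in> T - ?K}"
    by (intro finite_measure.finite_measure_mono[OF M]) (auto simp: vimage_def Int_def conj_commute)
  then show ?thesis
    using stat_dim_strict_mono[OF M K T _ Z] pos by auto
qed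

lemma finite_supporting_hyperplane_sections:
  fixes T :: "'a::euclidean_space set"
  assumes "polyhedron T"
  shows "finite {T \<inter> {x. v \<bullet> x = 0} | v. \<forall>d\<in>T. v \<bullet> d \<le> 0}"
proof (rule finite_subset[OF _ finite_polyhedron_faces[OF assms]])
  show "{T \<inter> {x. v \<bullet> x = 0} | v. \<forall>d\<in>T. v \<bullet> d \<le> 0} \<subseteq> {F. F face_of T}"
    using polyhedron_imp_convex[OF assms] by (auto intro: face_of_Int_supporting_hyperplane_le)
qed

lemma cone_tangent_cone: "cone (tangent_cone C x0)"
  unfolding tangent_cone_def
proof (rule cone_closure)
  show "cone {\<alpha> *\<^sub>R (x - x0) | \<alpha> x. \<alpha> \<ge> 0 \<and> x \<in> C}"
    unfolding cone_def by clarsimp (metis mult_nonneg_nonneg)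
qed

lemma zero_in_tangent_cone: "x0 \<in> C \<Longrightarrow> 0 \<in> tangent_cone C x0"
  unfolding tangent_cone_def by (rule closure_subset[THEN subsetD]) force

lemma tangent_cone_closest_point_subset:
  fixes C :: "'a::euclidean_space set"
  assumes "convex C" "closed C"
  shows "tangent_cone C (closest_point C y) \<subseteq> {d. (y - closest_point C y) \<bullet> d \<le> 0}"
  unfolding tangent_cone_def
  using closest_point_dot[OF assms]
  by (intro closure_minimal closed_halfspace_le) (auto simp: mult_nonneg_nonpos)

lemma eventually_polyhedron_feasible_direction:
  fixes a :: "'b \<Rightarrow> 'a::euclidean_space"
  assumes "finite F" "C = (\<Inter>h\<in>F. {x. a h \<bullet> x \<le> b h})" "x0 \<in> C"
    and "\<And>h. h \<in> F \<Longrightarrow> a h \<bullet> x0 = b h \<Longrightarrow> a h \<bullet> d \<le> 0"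
  shows "\<forall>\<^sub>F t in at_right 0. x0 + t *\<^sub>R d \<in> C"
  unfolding assms(2) INT_iff mem_Collect_eq
proof (rule eventually_ball_finite[OF assms(1)], intro ballI)
  fix h assume h: "h \<in> F"
  show "\<forall>\<^sub>F t in at_right 0. a h \<bullet> (x0 + t *\<^sub>R d) \<le> b h"
  proof (cases "a h \<bullet> x0 = b h")
    case True
    then show ?thesis
      using assms(4)[OF h] eventually_at_right_less[of 0]
      by (auto elim!: eventually_mono simp: inner_add_right mult_nonneg_nonpos)
  next
    case False
    with h assms(2,3) have "a h \<bullet> x0 < b h" by fastforce
    moreover have "((\<lambda>t. a h \<bullet> (x0 + t *\<^sub>R d)) \<longlongrightarrow> a h \<bullet> (x0 + 0 *\<^sub>R d)) (at_right 0)"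
      by (intro tendsto_intros)
    ultimately show ?thesis
      by (auto dest: order_tendstoD(2) elim!: eventually_mono)
  qed
qed

lemma tangent_cone_polyhedron:
  fixes a :: "'b \<Rightarrow> 'a::euclidean_space"
  assumes "finite F" "C = (\<Inter>h\<in>F. {x. a h \<bullet> x \<le> b h})" "x0 \<in> C"
  shows "tangent_cone C x0 = (\<Inter>h\<in>{h\<in>F. a h \<bullet> x0 = b h}. {d. a h \<bullet> d \<le> 0})"
    (is "_ = ?T")
proof
  show "tangent_cone C x0 \<subseteq> ?T"
    unfolding tangent_cone_def
  proof (intro closure_minimal closed_INT ballI closed_halfspace_le subsetI)
    fix u assume "u \<in> {\<alpha> *\<^sub>R (x - x0) | \<alpha> x. 0 \<le> \<alpha> \<and> x \<in> C}"
    then obtain \<alpha> x where u: "u = \<alpha> *\<^sub>R (x - x0)" "\<alpha> \<ge> 0" "x \<in> C" by blast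
    show "u \<in> ?T"
    proof (intro INT_I CollectI)
      fix h assume h: "h \<in> {h\<in>F. a h \<bullet> x0 = b h}"
      then have "a h \<bullet> x \<le> b h" using u(3) assms(2) by blast
      with h have "a h \<bullet> (x - x0) \<le> 0" by (simp add: inner_diff_right)
      then show "a h \<bullet> u \<le> 0"
        using u(1,2) by (simp add: mult_nonneg_nonpos)
    qed
  qed
next
  show "?T \<subseteq> tangent_cone C x0"
  proof
    fix d assume "d \<in> ?T"
    then have "\<forall>\<^sub>F t in at_right 0. x0 + t *\<^sub>R d \<in> C"
      by (intro eventually_polyhedron_feasible_direction[OF assms]) auto
    with eventually_at_right_less[of "0::real"]
    have "\<forall>\<^sub>F t in at_right 0. 0 < t \<and> x0 + t *\<^sub>R d \<in> C"
      by (rule eventually_conj)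
    then obtain t :: real where t: "t > 0" "x0 + t *\<^sub>R d \<in> C"
      using eventually_happens'[OF trivial_limit_at_right_real] by blast
    then have "d = (1/t) *\<^sub>R ((x0 + t *\<^sub>R d) - x0)" "1/t \<ge> 0" by simp_all
    with t(2) have "d \<in> {\<alpha> *\<^sub>R (x - x0) | \<alpha> x. \<alpha> \<ge> 0 \<and> x \<in> C}"
      by blast
    then show "d \<in> tangent_cone C x0"
      unfolding tangent_cone_def by (rule closure_subset[THEN subsetD])
  qed
qed

lemma polyhedron_tangent_cone:
  fixes C :: "'a::euclidean_space set"
  assumes "polyhedron C" "x0 \<in> C"
  shows "polyhedron (tangent_cone C x0)"
proof -
  obtain F where F: "finite F" "C = \<Inter>F" "\<forall>h\<in>F. \<exists>a b. a \<noteq> 0 \<and> h = {x. a \<bullet> x \<le> b}"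
    using assms(1) unfolding polyhedron_def by blast
  then obtain a b where ab: "\<And>h. h \<in> F \<Longrightarrow> h = {x. a h \<bullet> x \<le> b h}"
    by metis
  then have "C = (\<Inter>h\<in>F. {x. a h \<bullet> x \<le> b h})" using F(2) by auto
  then have "tangent_cone C x0 = (\<Inter>h\<in>{h\<in>F. a h \<bullet> x0 = b h}. {d. a h \<bullet> d \<le> 0})"
    by (rule tangent_cone_polyhedron[OF F(1) _ assms(2)])
  moreover have "polyhedron (\<Inter>h\<in>{h\<in>F. a h \<bullet> x0 = b h}. {d. a h \<bullet> d \<le> 0})"
    using F(1) by (intro polyhedron_Inter) (auto simp: polyhedron_halfspace_le)
  ultimately show ?thesis by simp
qed

theorem lemma3:
  fixes C :: "'a::euclidean_space set" and M :: "'w measure" and Z :: "'w \<Rightarrow> 'a"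
    and \<theta>0 :: 'a
  assumes "polyhedron C" and "interior C \<noteq> {}"
    and "prob_space M"
    and "Z \<in> borel_measurable M"
    and "integrable M (\<lambda>\<omega>. (norm (Z \<omega>))\<^sup>2)"
    and "(\<integral>\<omega>. Z \<omega> \<partial>M) = 0"
    and "\<theta>0 \<in> C"
    and "measure M {\<omega> \<in> space M. Z \<omega> \<in> interior (tangent_cone C \<theta>0)} > 0"
  shows "\<exists>c < stat_dim M Z (tangent_cone C \<theta>0).
           \<forall>\<theta>s. \<theta>s \<notin> C \<and> closest_point C \<theta>s = \<theta>0 \<longrightarrow>
             stat_dim M Z (tangent_cone C (closest_point C \<theta>s) \<inter> perp (\<theta>s - closest_point C \<theta>s)) \<le> c"
proof -
  let ?T = "tangent_cone C \<theta>0"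
  have M: "finite_measure M" by (rule prob_space.finite_measure[OF assms(3)])
  have T_poly: "polyhedron ?T" by (rule polyhedron_tangent_cone[OF assms(1,7)])
  then have T: "convex ?T" "closed ?T" "cone ?T" "?T \<noteq> {}"
    using polyhedron_imp_convex polyhedron_imp_closed cone_tangent_cone zero_in_tangent_cone[OF assms(7)]
    by blast+
  define S where "S = {?T \<inter> {x. v \<bullet> x = 0} | v. v \<noteq> 0 \<and> (\<forall>d\<in>?T. v \<bullet> d \<le> 0)}"
  have "finite S"
    using finite_supporting_hyperplane_sections[OF T_poly]
    by (rule finite_subset[rotated]) (auto simp: S_def)
  have less: "stat_dim M Z K < stat_dim M Z ?T" if "K \<in> S" for K
    using \<open>K \<in> S\<close> stat_dim_supporting_hyperplane_less[OF M T _ _ assms(4,5,8)]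
    unfolding S_def by blast
  \<comment> \<open>The extra element keeps \<open>Max\<close> meaningful when \<open>S = {}\<close>.\<close>
  define c where "c = Max (insert (stat_dim M Z ?T - 1) (stat_dim M Z ` S))"
  have "c < stat_dim M Z ?T" unfolding c_def using \<open>finite S\<close> less by auto
  moreover have "stat_dim M Z (tangent_cone C (closest_point C \<theta>s) \<inter> perp (\<theta>s - closest_point C \<theta>s)) \<le> c"
    if "\<theta>s \<notin> C" "closest_point C \<theta>s = \<theta>0" for \<theta>s
  proof -
    have "tangent_cone C (closest_point C \<theta>s) \<inter> perp (\<theta>s - closest_point C \<theta>s)
        = ?T \<inter> {x. (\<theta>s - \<theta>0) \<bullet> x = 0}"
      using that by (auto simp: perp_def inner_commute)
    moreover have "\<theta>s - \<theta>0 \<noteq> 0" using that assms(7) by auto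
    moreover have "\<forall>d\<in>?T. (\<theta>s - \<theta>0) \<bullet> d \<le> 0"
      using tangent_cone_closest_point_subset[of C \<theta>s] assms(1) that(2)
      by (auto simp: polyhedron_imp_convex polyhedron_imp_closed)
    ultimately have "tangent_cone C (closest_point C \<theta>s) \<inter> perp (\<theta>s - closest_point C \<theta>s) \<in> S"
      unfolding S_def by blast
    then show ?thesis unfolding c_def using \<open>finite S\<close> by (intro Max_ge) auto
  qed
  ultimately show ?thesis by blast
qed

end
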